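(* For every integers $d \geq 2$ and $s \geq 1$, $$\mathsf U_{d,s} \subseteq \mathsf L_{d,s} \subseteq \mathsf B_d.$$ In particular, $$\overline{\bigcup_{s\geq 1}\mathsf L_{d,s}}=\mathsf B_d.$$
   Context: $\mathsf B_d$ is the set of $d\times d$ bistochastic matrices. For $U\in\mathcal U(ds)$ (unitary $ds\times ds$ matrices) viewed as a $d\times d$ block matrix with blocks $U_{ij}\in M_s(\mathbb C)$, $\phi_{d,s}(U)=\big(\tfrac1s\|U_{ij}\|_F^2\big)_{i,j=1}^d$ with $\|X\|_F=\operatorname{Tr}(XX^* )^{1/2}$, and $\mathsf U_{d,s}:=\phi_{d,s}(\mathcal U(ds))$. $\Delta_d$ is the probability simplex in $\mathbb R^d$. $\mathsf{Brac}_{d,s}$ is the set of $(\alpha,\beta)\in\Delta_d^2$ for which there exist $A_1,\dots,A_d,B_1,\dots,B_d\in M_s(\mathbb C)$ with $\sum_i A_iA_i^*=\sum_iB_iB_i^*=I_s$, $\sum_iA_iB_i^*=0$, $\tfrac1s\|A_i\|_F^2=\alpha_i$, $\tfrac1s\|B_i\|_F^2=\beta_i$ for all $i$. The set of generalized bracelet matrices $\mathsf L_{d,s}$ is the set of $B\in\mathsf B_d$ such that for all rows $i_1\ne i_2$, $(B_{i_1\cdot},B_{i_2\cdot})\in\mathsf{Brac}_{d,s}$ and for all columns $j_1\ne j_2$, $(B_{\cdot j_1},B_{\cdot j_2})\in\mathsf{Brac}_{d,s}$. *)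

theory Defs
  imports "HOL-Analysis.Analysis"
begin

text \<open>Conventions: a d-by-d real matrix is a function nat => nat => real whose
entries outside {0..<d} x {0..<d} are 0; a vector in R^d is nat => real, zero
outside {0..<d}. Complex matrices are nat => nat => complex, only entries with
indices in range are relevant. Topology: product topology on functions, which
on the extensional (zero-padded) matrices coincides with the Euclidean one.\<close>

definition bistochastic :: "nat \<Rightarrow> (nat \<Rightarrow> nat \<Rightarrow> real) set" where
  "bistochastic d = {B. (\<forall>i j. (d \<le> i \<or> d \<le> j) \<longrightarrow> B i j = 0)
      \<and> (\<forall>i<d. \<forall>j<d. 0 \<le> B i j)
      \<and> (\<forall>i<d. (\<Sum>j<d. B i j) = 1)
      \<and> (\<forall>j<d. (\<Sum>i<d. B i j) = 1)}"

definition prob_simplex :: "nat \<Rightarrow> (nat \<Rightarrow> real) set" where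
  "prob_simplex d = {a. (\<forall>i. d \<le> i \<longrightarrow> a i = 0) \<and> (\<forall>i<d. 0 \<le> a i) \<and> (\<Sum>i<d. a i) = 1}"

definition unitary_mat :: "nat \<Rightarrow> (nat \<Rightarrow> nat \<Rightarrow> complex) \<Rightarrow> bool" where
  "unitary_mat n U \<longleftrightarrow>
     (\<forall>i<n. \<forall>j<n. (\<Sum>k<n. U i k * cnj (U j k)) = (if i = j then 1 else 0)) \<and>
     (\<forall>i<n. \<forall>j<n. (\<Sum>k<n. cnj (U k i) * U k j) = (if i = j then 1 else 0))"

definition block_frob_sq :: "nat \<Rightarrow> (nat \<Rightarrow> nat \<Rightarrow> complex) \<Rightarrow> nat \<Rightarrow> nat \<Rightarrow> real" where
  "block_frob_sq s U i j = (\<Sum>a<s. \<Sum>b<s. (cmod (U (i * s + a) (j * s + b)))\<^sup>2)"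

definition phi :: "nat \<Rightarrow> nat \<Rightarrow> (nat \<Rightarrow> nat \<Rightarrow> complex) \<Rightarrow> (nat \<Rightarrow> nat \<Rightarrow> real)" where
  "phi d s U = (\<lambda>i j. if i < d \<and> j < d then block_frob_sq s U i j / real s else 0)"

definition U_set :: "nat \<Rightarrow> nat \<Rightarrow> (nat \<Rightarrow> nat \<Rightarrow> real) set" where
  "U_set d s = phi d s ` {U. unitary_mat (d * s) U}"

definition frob_sq :: "nat \<Rightarrow> (nat \<Rightarrow> nat \<Rightarrow> complex) \<Rightarrow> real" where
  "frob_sq s A = (\<Sum>a<s. \<Sum>b<s. (cmod (A a b))\<^sup>2)"

definition Brac :: "nat \<Rightarrow> nat \<Rightarrow> ((nat \<Rightarrow> real) \<times> (nat \<Rightarrow> real)) set" where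
  "Brac d s = {(\<alpha>, \<beta>). \<alpha> \<in> prob_simplex d \<and> \<beta> \<in> prob_simplex d \<and>
     (\<exists>A B :: nat \<Rightarrow> nat \<Rightarrow> nat \<Rightarrow> complex.
        (\<forall>a<s. \<forall>b<s. (\<Sum>i<d. \<Sum>k<s. A i a k * cnj (A i b k)) = (if a = b then 1 else 0)) \<and>
        (\<forall>a<s. \<forall>b<s. (\<Sum>i<d. \<Sum>k<s. B i a k * cnj (B i b k)) = (if a = b then 1 else 0)) \<and>
        (\<forall>a<s. \<forall>b<s. (\<Sum>i<d. \<Sum>k<s. A i a k * cnj (B i b k)) = 0) \<and>
        (\<forall>i<d. frob_sq s (A i) / real s = \<alpha> i) \<and>
        (\<forall>i<d. frob_sq s (B i) / real s = \<beta> i))}"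

definition L_set :: "nat \<Rightarrow> nat \<Rightarrow> (nat \<Rightarrow> nat \<Rightarrow> real) set" where
  "L_set d s = {B \<in> bistochastic d.
      (\<forall>i1<d. \<forall>i2<d. i1 \<noteq> i2 \<longrightarrow> ((\<lambda>j. B i1 j), (\<lambda>j. B i2 j)) \<in> Brac d s) \<and>
      (\<forall>j1<d. \<forall>j2<d. j1 \<noteq> j2 \<longrightarrow> ((\<lambda>i. B i j1), (\<lambda>i. B i j2)) \<in> Brac d s)}"

end

theory Submission
  imports Defs
begin

text \<open>Split a unitary \<open>U\<close> of size \<open>ds\<close> into \<open>s \<times> s\<close> blocks \<open>U(i,j)\<close>. Orthonormality
of its rows says that \<open>\<Sum>\<^sub>j U(i,j) U(i,j)\<^sup>* = I\<close> and \<open>\<Sum>\<^sub>j U(i,j) U(i',j)\<^sup>* = 0\<close> for \<open>i \<noteq> i'\<close>, so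
the block rows \<open>i, i'\<close> witness that rows \<open>i, i'\<close> of \<open>\<phi>(U)\<close> form a bracelet pair; columns
of \<open>\<phi>(U)\<close> are rows of \<open>\<phi>(U\<^sup>*)\<close>.

For density, every bistochastic matrix with entries in \<open>(1/s)\<int>\<close> is \<open>\<phi>\<close> of a permutation
matrix of size \<open>ds\<close>. Rounding \<open>tB\<close> down to an integer matrix \<open>F\<close> leaves row and column
deficits \<open>r, c\<close> with \<open>\<Sum> r = \<Sum> c = D\<close>, and \<open>D F + r c\<^sup>T\<close> has all line sums \<open>tD\<close>;
divided by \<open>tD\<close> it lies within \<open>(d + 1)/t\<close> of \<open>B\<close>.\<close>

lemma div_block_index [simp]: "a < (s::nat) \<Longrightarrow> (i * s + a) div s = i"
  by (simp add: add.commute)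

lemma mod_block_index [simp]: "a < (s::nat) \<Longrightarrow> (i * s + a) mod s = a"
  by (simp add: add.commute)

lemma block_index_less: "i < d \<Longrightarrow> a < s \<Longrightarrow> i * s + a < d * (s::nat)"
proof -
  assume "i < d" "a < s"
  then have "i * s + a < Suc i * s" by simp
  also have "\<dots> \<le> d * s" using \<open>i < d\<close> by (intro mult_right_mono) auto
  finally show ?thesis .
qed

lemma block_index_eq_iff:
  "a < (s::nat) \<Longrightarrow> b < s \<Longrightarrow> i * s + a = j * s + b \<longleftrightarrow> i = j \<and> a = b"
  by (metis div_block_index mod_block_index)

lemma sum_lessThan_mult_blocks:
  "(\<Sum>k < d * s. f k) = (\<Sum>j<d. \<Sum>b<(s::nat). f (j * s + b))"
proof -
  have "(\<Sum>k < d * s. f k) = (\<Sum>j<d. sum f {j * s..<j * s + s})"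
    using sum.nat_group[of f s d] by simp
  also have "\<dots> = (\<Sum>j<d. \<Sum>b<s. f (j * s + b))"
    using sum.shift_bounds_nat_ivl[of f 0 "_ * s" s]
    by (simp add: atLeast0LessThan add.commute)
  finally show ?thesis .
qed

section \<open>Unitary matrices and their block norms\<close>

definition adjoint_mat :: "(nat \<Rightarrow> nat \<Rightarrow> complex) \<Rightarrow> nat \<Rightarrow> nat \<Rightarrow> complex" where
  "adjoint_mat U = (\<lambda>p q. cnj (U q p))"

lemma unitary_mat_adjoint: "unitary_mat n U \<Longrightarrow> unitary_mat n (adjoint_mat U)"
  by (simp add: unitary_mat_def adjoint_mat_def mult.commute)

lemma block_frob_sq_adjoint: "block_frob_sq s (adjoint_mat U) i j = block_frob_sq s U j i"
  unfolding block_frob_sq_def adjoint_mat_def by (subst sum.swap) simp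

lemma phi_adjoint: "phi d s (adjoint_mat U) i j = phi d s U j i"
  by (auto simp: phi_def block_frob_sq_adjoint)

lemma block_frob_sq_nonneg: "0 \<le> block_frob_sq s U i j"
  unfolding block_frob_sq_def by (intro sum_nonneg) auto

lemma unitary_mat_row_norm:
  assumes "unitary_mat n U" "p < n"
  shows "(\<Sum>k<n. (cmod (U p k))\<^sup>2) = 1"
proof -
  have "complex_of_real (\<Sum>k<n. (cmod (U p k))\<^sup>2) = (\<Sum>k<n. U p k * cnj (U p k))"
    by (subst of_real_sum) (simp only: complex_norm_square)
  also have "\<dots> = 1" using assms by (simp add: unitary_mat_def)
  finally show ?thesis using of_real_eq_1_iff by blast
qed

lemma unitary_mat_block_rows:
  assumes U: "unitary_mat (d * s) U" and "i\<^sub>1 < d" "i\<^sub>2 < d" "a < s" "b < s"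
  shows "(\<Sum>j<d. \<Sum>k<s. U (i\<^sub>1 * s + a) (j * s + k) * cnj (U (i\<^sub>2 * s + b) (j * s + k)))
     = (if i\<^sub>1 = i\<^sub>2 \<and> a = b then 1 else 0)"
proof -
  have "(\<Sum>j<d. \<Sum>k<s. U (i\<^sub>1 * s + a) (j * s + k) * cnj (U (i\<^sub>2 * s + b) (j * s + k)))
      = (\<Sum>k < d * s. U (i\<^sub>1 * s + a) k * cnj (U (i\<^sub>2 * s + b) k))"
    by (rule sum_lessThan_mult_blocks[symmetric])
  also have "\<dots> = (if i\<^sub>1 * s + a = i\<^sub>2 * s + b then 1 else 0)"
    using U assms(2-) by (simp add: unitary_mat_def block_index_less)
  finally show ?thesis using assms(4,5) by (simp add: block_index_eq_iff)
qed

lemma block_frob_sq_row_sum: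
  assumes U: "unitary_mat (d * s) U" and i: "i < d"
  shows "(\<Sum>j<d. block_frob_sq s U i j) = real s"
proof -
  have "(\<Sum>j<d. block_frob_sq s U i j)
      = (\<Sum>a<s. \<Sum>j<d. \<Sum>b<s. (cmod (U (i * s + a) (j * s + b)))\<^sup>2)"
    unfolding block_frob_sq_def by (rule sum.swap)
  also have "\<dots> = (\<Sum>a<s. 1)"
  proof (rule sum.cong[OF refl])
    fix a assume "a \<in> {..<s}"
    then show "(\<Sum>j<d. \<Sum>b<s. (cmod (U (i * s + a) (j * s + b)))\<^sup>2) = 1"
      using unitary_mat_row_norm[OF U block_index_less[OF i]]
        sum_lessThan_mult_blocks[of "\<lambda>k. (cmod (U (i * s + a) k))\<^sup>2" d s]
      by simp
  qed
  finally show ?thesis by simp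
qed

lemma phi_row_sum:
  assumes "unitary_mat (d * s) U" "0 < s" "i < d"
  shows "(\<Sum>j<d. phi d s U i j) = 1"
  using block_frob_sq_row_sum[OF assms(1,3)] assms(2,3)
  by (simp add: phi_def flip: sum_divide_distrib)

lemma phi_row_in_prob_simplex:
  assumes "unitary_mat (d * s) U" "0 < s" "i < d"
  shows "(\<lambda>j. phi d s U i j) \<in> prob_simplex d"
  using phi_row_sum[OF assms] block_frob_sq_nonneg
  by (auto simp: prob_simplex_def phi_def)

lemma phi_in_bistochastic:
  assumes U: "unitary_mat (d * s) U" and s: "0 < s"
  shows "phi d s U \<in> bistochastic d"
proof -
  have "(\<Sum>i<d. phi d s U i j) = 1" if "j < d" for j
    using phi_row_sum[OF unitary_mat_adjoint[OF U] s that] by (simp add: phi_adjoint)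
  then show ?thesis
    using phi_row_sum[OF U s] block_frob_sq_nonneg
    by (auto simp: bistochastic_def phi_def)
qed

lemma phi_rows_in_Brac:
  assumes U: "unitary_mat (d * s) U" and s: "0 < s"
    and i: "i\<^sub>1 < d" "i\<^sub>2 < d" "i\<^sub>1 \<noteq> i\<^sub>2"
  shows "((\<lambda>j. phi d s U i\<^sub>1 j), (\<lambda>j. phi d s U i\<^sub>2 j)) \<in> Brac d s"
proof -
  define A where "A j a k = U (i\<^sub>1 * s + a) (j * s + k)" for j a k
  define B where "B j a k = U (i\<^sub>2 * s + a) (j * s + k)" for j a k
  have "\<forall>a<s. \<forall>b<s. (\<Sum>j<d. \<Sum>k<s. A j a k * cnj (A j b k)) = (if a = b then 1 else 0)"
    "\<forall>a<s. \<forall>b<s. (\<Sum>j<d. \<Sum>k<s. B j a k * cnj (B j b k)) = (if a = b then 1 else 0)"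
    "\<forall>a<s. \<forall>b<s. (\<Sum>j<d. \<Sum>k<s. A j a k * cnj (B j b k)) = 0"
    unfolding A_def B_def using unitary_mat_block_rows[OF U] i by simp_all
  moreover have "\<forall>j<d. frob_sq s (A j) / real s = phi d s U i\<^sub>1 j"
    "\<forall>j<d. frob_sq s (B j) / real s = phi d s U i\<^sub>2 j"
    unfolding A_def B_def phi_def frob_sq_def block_frob_sq_def using i by simp_all
  ultimately show ?thesis
    using phi_row_in_prob_simplex[OF U s] i unfolding Brac_def by blast
qed

lemma U_set_subset_L_set:
  assumes s: "0 < s"
  shows "U_set d s \<subseteq> L_set d s"
proof
  fix M assume "M \<in> U_set d s"
  then obtain U where U: "unitary_mat (d * s) U" and M: "M = phi d s U"
    unfolding U_set_def by auto
  have "((\<lambda>i. M i j\<^sub>1), (\<lambda>i. M i j\<^sub>2)) \<in> Brac d s"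
    if "j\<^sub>1 < d" "j\<^sub>2 < d" "j\<^sub>1 \<noteq> j\<^sub>2" for j\<^sub>1 j\<^sub>2
    using phi_rows_in_Brac[OF unitary_mat_adjoint[OF U] s that] by (simp add: M phi_adjoint)
  then show "M \<in> L_set d s"
    using phi_in_bistochastic[OF U s] phi_rows_in_Brac[OF U s]
    unfolding L_set_def M by blast
qed

section \<open>Integer matrices from permutation matrices\<close>

lemma unitary_mat_permutation:
  assumes \<sigma>: "bij_betw \<sigma> {..<n} {..<n}"
  shows "unitary_mat n (\<lambda>p q. if q = \<sigma> p then 1 else 0)"
proof -
  have rows: "(\<Sum>k<n. (if k = \<sigma> i then 1 else 0) * cnj (if k = \<sigma> j then 1 else 0))
      = (if i = j then 1 else (0::complex))" if "i < n" "j < n" for i j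
  proof -
    have "\<sigma> i < n" using \<sigma> that by (auto dest: bij_betwE)
    moreover have "\<sigma> i = \<sigma> j \<longleftrightarrow> i = j"
      using bij_betw_imp_inj_on[OF \<sigma>] that by (auto dest: inj_onD)
    ultimately show ?thesis by (simp add: if_distrib[of "\<lambda>x. x * _"] cong: if_cong)
  qed
  have cols: "(\<Sum>k<n. cnj (if i = \<sigma> k then 1 else 0) * (if j = \<sigma> k then 1 else 0))
      = (if i = j then 1 else (0::complex))" if "i < n" for i j
  proof -
    have "(\<Sum>k<n. cnj (if i = \<sigma> k then 1 else 0) * (if j = \<sigma> k then 1 else 0))
        = (\<Sum>q<n. cnj (if i = q then 1 else 0) * (if j = q then (1::complex) else 0))"
      using sum.reindex_bij_betw[OF \<sigma>] .
    also have "\<dots> = (\<Sum>q<n. if q = i then (if i = j then 1 else 0) else 0)"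
      by (intro sum.cong) auto
    finally show ?thesis using that by simp
  qed
  show ?thesis unfolding unitary_mat_def using rows cols by simp
qed

lemma sum_indicator_block:
  assumes "0 < (s::nat)"
  shows "(\<Sum>b<s. if j * s + b = q then 1 else (0::real)) = (if q div s = j then 1 else 0)"
proof -
  have "{b. b < s \<and> j * s + b = q} = (if q div s = j then {q mod s} else {})"
    using assms div_mult_mod_eq[of q s] by (auto simp del: div_mult_mod_eq) (metis mod_block_index)
  then show ?thesis
    by (simp add: sum.If_cases Collect_conj_eq[symmetric] Int_def lessThan_def)
qed

lemma block_frob_sq_permutation:
  assumes "0 < s"
  shows "block_frob_sq s (\<lambda>p q. if q = \<sigma> p then 1 else 0) i j
       = real (card {a. a < s \<and> \<sigma> (i * s + a) div s = j})"
proof -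
  have "block_frob_sq s (\<lambda>p q. if q = \<sigma> p then 1 else 0) i j
      = (\<Sum>a<s. if \<sigma> (i * s + a) div s = j then 1 else 0)"
    unfolding block_frob_sq_def using sum_indicator_block[OF assms]
    by (simp add: if_distrib[of "\<lambda>x. (cmod x)\<^sup>2"] cong: if_cong)
  also have "\<dots> = real (card {a. a < s \<and> \<sigma> (i * s + a) div s = j})"
    by (simp add: sum.If_cases Collect_conj_eq lessThan_def)
  finally show ?thesis .
qed

lemma exists_fun_with_fibre_cards:
  fixes d :: nat and n :: "nat \<Rightarrow> nat"
  shows "\<exists>h. (\<forall>a < (\<Sum>j<d. n j). h a < d) \<and> (\<forall>j<d. card {a. a < (\<Sum>j<d. n j) \<and> h a = j} = n j)"
proof (induction d)
  case 0
  then show ?case by simp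
next
  case (Suc d)
  define S where "S = (\<Sum>j<d. n j)"
  obtain h where h_less: "\<forall>a<S. h a < d" and h_card: "\<forall>j<d. card {a. a < S \<and> h a = j} = n j"
    using Suc.IH unfolding S_def by blast
  define h' where "h' a = (if a < S then h a else d)" for a
  have sum: "(\<Sum>j < Suc d. n j) = S + n d" unfolding S_def by simp
  have "card {a. a < S + n d \<and> h' a = j} = n j" if "j < Suc d" for j
  proof (cases "j < d")
    case True
    then have "{a. a < S + n d \<and> h' a = j} = {a. a < S \<and> h a = j}"
      unfolding h'_def by auto
    then show ?thesis using h_card True by simp
  next
    case False
    with that have j: "j = d" by simp
    have "h a \<noteq> d" if "a < S" for a
      using h_less that by fastforce
    then have "{a. a < S + n d \<and> h' a = j} = {S..<S + n d}"
      unfolding h'_def j by auto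
    then show ?thesis unfolding j by simp
  qed
  moreover have "\<forall>a < S + n d. h' a < Suc d"
    unfolding h'_def using h_less by auto
  ultimately show ?case unfolding sum by blast
qed

lemma exists_row_labelling:
  fixes N :: "nat \<Rightarrow> nat \<Rightarrow> nat"
  assumes "\<forall>i<d. (\<Sum>j<d. N i j) = s"
  shows "\<exists>H. (\<forall>i<d. \<forall>a<s. H i a < d) \<and> (\<forall>i<d. \<forall>j<d. card {a. a < s \<and> H i a = j} = N i j)"
proof -
  have "\<forall>i. \<exists>h. i < d \<longrightarrow> (\<forall>a<s. h a < d) \<and> (\<forall>j<d. card {a. a < s \<and> h a = j} = N i j)"
  proof
    fix i
    show "\<exists>h. i < d \<longrightarrow> (\<forall>a<s. h a < d) \<and> (\<forall>j<d. card {a. a < s \<and> h a = j} = N i j)"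
      using exists_fun_with_fibre_cards[where d = d and n = "N i"] assms by (cases "i < d") auto
  qed
  then show ?thesis by metis
qed

lemma card_block_label_fibre:
  fixes d s :: nat
  assumes s: "0 < s" and h: "\<forall>i<d. \<forall>a<s. h i a < d"
  shows "card {p \<in> {..<d * s}. (p div s, h (p div s) (p mod s)) = (i, j)}
       = (if i < d \<and> j < d then card {a. a < s \<and> h i a = j} else 0)"
proof (cases "i < d")
  case True
  have "{p \<in> {..<d * s}. (p div s, h (p div s) (p mod s)) = (i, j)}
      = (\<lambda>a. i * s + a) ` {a. a < s \<and> h i a = j}"
    using True s by (auto simp: block_index_less image_iff intro!: exI[of _ "_ mod s"])
  moreover have "j \<ge> d \<Longrightarrow> {a. a < s \<and> h i a = j} = {}"
    using h True by fastforce
  ultimately show ?thesis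
    using True by (auto simp: card_image inj_on_def)
next
  case False
  have "p div s < d" if "p < d * s" for p
    using that by (simp add: less_mult_imp_div_less)
  then have "{p \<in> {..<d * s}. (p div s, h (p div s) (p mod s)) = (i, j)} = {}"
    using False by fastforce
  then show ?thesis using False by simp
qed

lemma exists_bij_betw_preserving_labels:
  assumes "finite A" "finite B"
    and "\<And>x. card {a \<in> A. L a = x} = card {b \<in> B. M b = x}"
  shows "\<exists>\<sigma>. bij_betw \<sigma> A B \<and> (\<forall>a\<in>A. M (\<sigma> a) = L a)"
proof -
  have "\<forall>x. \<exists>f. bij_betw f {a \<in> A. L a = x} {b \<in> B. M b = x}"
    using assms by (intro allI finite_same_card_bij) auto
  then obtain F where F: "\<And>x. bij_betw (F x) {a \<in> A. L a = x} {b \<in> B. M b = x}"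
    by metis
  define \<sigma> where "\<sigma> a = F (L a) a" for a
  have \<sigma>: "\<sigma> a \<in> B \<and> M (\<sigma> a) = L a" if "a \<in> A" for a
    using bij_betwE[OF F[of "L a"]] that unfolding \<sigma>_def by auto
  have "inj_on \<sigma> A"
  proof (rule inj_onI)
    fix a a' assume a: "a \<in> A" "a' \<in> A" "\<sigma> a = \<sigma> a'"
    then have "L a = L a'" using \<sigma> by metis
    with a show "a = a'"
      using bij_betw_imp_inj_on[OF F[of "L a"]] unfolding \<sigma>_def by (auto dest: inj_onD)
  qed
  moreover have "B \<subseteq> \<sigma> ` A"
  proof
    fix b assume "b \<in> B"
    then obtain a where a: "a \<in> A" "L a = M b" "b = F (M b) a"
      using bij_betw_imp_surj_on[OF F[of "M b"]] by force
    then have "\<sigma> a = b" unfolding \<sigma>_def by simp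
    then show "b \<in> \<sigma> ` A" using a(1) by blast
  qed
  ultimately show ?thesis
    using \<sigma> by (intro exI[of _ \<sigma>]) (auto simp: bij_betw_def)
qed

text \<open>Row index \<open>i s + a\<close> is labelled by its block \<open>i\<close> and a target block column \<open>H i a\<close>,
column index \<open>j s + b\<close> by a source block row \<open>G j b\<close> and its block \<open>j\<close>; both labellings
have \<open>N i j\<close> indices with label \<open>(i, j)\<close>, and matching labels gives the permutation.\<close>

lemma exists_unitary_with_block_counts:
  fixes N :: "nat \<Rightarrow> nat \<Rightarrow> nat"
  assumes s: "0 < s" and rows: "\<forall>i<d. (\<Sum>j<d. N i j) = s" and cols: "\<forall>j<d. (\<Sum>i<d. N i j) = s"
  shows "\<exists>U. unitary_mat (d * s) U \<and> (\<forall>i<d. \<forall>j<d. block_frob_sq s U i j = real (N i j))"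
proof -
  obtain H where H: "\<forall>i<d. \<forall>a<s. H i a < d" "\<forall>i<d. \<forall>j<d. card {a. a < s \<and> H i a = j} = N i j"
    using exists_row_labelling[OF rows] by blast
  obtain G where G: "\<forall>j<d. \<forall>b<s. G j b < d" "\<forall>j<d. \<forall>i<d. card {b. b < s \<and> G j b = i} = N i j"
    using exists_row_labelling[of d "\<lambda>j i. N i j"] cols by blast
  define L where "L p = (p div s, H (p div s) (p mod s))" for p
  define M where "M q = (G (q div s) (q mod s), q div s)" for q
  have "card {p \<in> {..<d * s}. L p = (i, j)} = (if i < d \<and> j < d then N i j else 0)" for i j
    using card_block_label_fibre[OF s H(1), of i j] H(2) unfolding L_def by simp
  moreover have "card {q \<in> {..<d * s}. M q = (i, j)} = (if i < d \<and> j < d then N i j else 0)"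
    for i j
  proof -
    have "{q \<in> {..<d * s}. M q = (i, j)}
        = {q \<in> {..<d * s}. (q div s, G (q div s) (q mod s)) = (j, i)}"
      unfolding M_def by auto
    then show ?thesis using card_block_label_fibre[OF s G(1), of j i] G(2) by auto
  qed
  ultimately have "card {p \<in> {..<d * s}. L p = x} = card {q \<in> {..<d * s}. M q = x}" for x
    by (cases x) simp
  then obtain \<sigma> where \<sigma>: "bij_betw \<sigma> {..<d * s} {..<d * s}"
    and labels: "\<forall>p \<in> {..<d * s}. M (\<sigma> p) = L p"
    using exists_bij_betw_preserving_labels[of "{..<d * s}" "{..<d * s}" L M] by force
  have "block_frob_sq s (\<lambda>p q. if q = \<sigma> p then 1 else 0) i j = real (N i j)"
    if "i < d" "j < d" for i j
  proof -
    have "\<sigma> (i * s + a) div s = H i a" if "a < s" for a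
      using labels block_index_less[OF \<open>i < d\<close> that] that by (auto simp: L_def M_def)
    then have "{a. a < s \<and> \<sigma> (i * s + a) div s = j} = {a. a < s \<and> H i a = j}" by auto
    then show ?thesis using block_frob_sq_permutation[OF s] H(2) that by simp
  qed
  then show ?thesis using unitary_mat_permutation[OF \<sigma>] by blast
qed

lemma integer_matrix_in_U_set:
  fixes N :: "nat \<Rightarrow> nat \<Rightarrow> nat"
  assumes "0 < s" "\<forall>i<d. (\<Sum>j<d. N i j) = s" "\<forall>j<d. (\<Sum>i<d. N i j) = s"
  shows "(\<lambda>i j. if i < d \<and> j < d then real (N i j) / real s else 0) \<in> U_set d s"
proof -
  obtain U where "unitary_mat (d * s) U" "\<forall>i<d. \<forall>j<d. block_frob_sq s U i j = real (N i j)"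
    using exists_unitary_with_block_counts[OF assms] by blast
  then show ?thesis
    unfolding U_set_def by (intro image_eqI[of _ _ U] ext) (auto simp: phi_def)
qed

section \<open>Rational approximation of bistochastic matrices\<close>

lemma floor_scaled_sum_bounds:
  fixes b :: "nat \<Rightarrow> real"
  assumes nonneg: "\<And>j. j < d \<Longrightarrow> 0 \<le> b j" and sum_one: "(\<Sum>j<d. b j) = 1"
  shows "(\<Sum>j<d. nat \<lfloor>real t * b j\<rfloor>) \<le> t \<and> t \<le> (\<Sum>j<d. nat \<lfloor>real t * b j\<rfloor>) + d"
proof -
  have floor: "real (nat \<lfloor>real t * b j\<rfloor>) \<le> real t * b j \<and> real t * b j \<le> real (nat \<lfloor>real t * b j\<rfloor>) + 1"
    if "j < d" for j
    using nonneg[OF that] by simp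
  have "(\<Sum>j<d. real t * b j) = real t"
    using sum_one by (simp flip: sum_distrib_left)
  moreover have "(\<Sum>j<d. real (nat \<lfloor>real t * b j\<rfloor>)) \<le> (\<Sum>j<d. real t * b j)"
    "(\<Sum>j<d. real t * b j) \<le> (\<Sum>j<d. real (nat \<lfloor>real t * b j\<rfloor>) + 1)"
    using floor by (auto intro: sum_mono)
  ultimately show ?thesis
    by (simp add: sum.distrib flip: of_nat_sum)
qed

text \<open>The factor \<open>max 1 D\<close> instead of \<open>D\<close> keeps the line sums positive when \<open>D = 0\<close>,
in which case all deficits vanish.\<close>

lemma deficit_completion_sum:
  fixes F c :: "nat \<Rightarrow> nat"
  assumes "(\<Sum>j<d. F j) + r = t" "r \<le> D" "(\<Sum>j<d. c j) = D"
  shows "(\<Sum>j<d. max 1 D * F j + r * c j) = t * max 1 D"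
proof -
  have "(\<Sum>j<d. max 1 D * F j + r * c j) = max 1 D * (\<Sum>j<d. F j) + r * D"
    using assms(3) by (simp add: sum.distrib flip: sum_distrib_left)
  then show ?thesis using assms(1,2) by (cases "D = 0") (auto simp: algebra_simps max_def)
qed

lemma deficit_completion_error:
  fixes f x b t E d :: real
  assumes t: "0 < t" and E: "0 < E" and f: "\<bar>f - t * b\<bar> \<le> 1" and x: "0 \<le> x" "x \<le> d * E"
  shows "\<bar>(E * f + x) / (t * E) - b\<bar> \<le> (d + 1) / t"
proof -
  have "x / (t * E) \<le> d * E / (t * E)"
    using x t E by (intro divide_right_mono) auto
  then have correction: "\<bar>x / (t * E)\<bar> \<le> d / t"
    using x t E by simp
  have "(E * f + x) / (t * E) - b = (f - t * b) / t + x / (t * E)"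
    using t E by (simp add: field_simps)
  then have "\<bar>(E * f + x) / (t * E) - b\<bar> \<le> \<bar>(f - t * b) / t\<bar> + \<bar>x / (t * E)\<bar>"
    by (simp only: abs_triangle_ineq)
  also have "\<dots> \<le> 1 / t + d / t"
    using f t correction by (intro add_mono) (simp_all add: abs_divide divide_right_mono)
  also have "\<dots> = (d + 1) / t"
    by (simp add: add_divide_distrib)
  finally show ?thesis .
qed

lemma bistochastic_integer_approx:
  assumes B: "B \<in> bistochastic d" and t: "0 < t"
  shows "\<exists>s N. 0 < s \<and> (\<forall>i<d. (\<Sum>j<d. N i j) = s) \<and> (\<forall>j<d. (\<Sum>i<d. N i j) = (s::nat)) \<and>
     (\<forall>i<d. \<forall>j<d. \<bar>real (N i j) / real s - B i j\<bar> \<le> (real d + 1) / real t)"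
proof -
  define F where "F i j = nat \<lfloor>real t * B i j\<rfloor>" for i j
  define r where "r i = t - (\<Sum>j<d. F i j)" for i
  define c where "c j = t - (\<Sum>i<d. F i j)" for j
  define D where "D = (\<Sum>i<d. r i)"
  define E where "E = max 1 D"
  define N where "N i j = E * F i j + r i * c j" for i j
  have row: "(\<Sum>j<d. F i j) + r i = t \<and> r i \<le> d" if "i < d" for i
    using floor_scaled_sum_bounds[of d "B i" t] B that
    unfolding F_def r_def bistochastic_def by auto
  have col: "(\<Sum>i<d. F i j) + c j = t \<and> c j \<le> d" if "j < d" for j
    using floor_scaled_sum_bounds[of d "\<lambda>i. B i j" t] B that
    unfolding F_def c_def bistochastic_def by auto
  have "(\<Sum>i<d. \<Sum>j<d. F i j) + D = d * t"
    using row unfolding D_def by (simp flip: sum.distrib)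
  moreover have "(\<Sum>j<d. \<Sum>i<d. F i j) + (\<Sum>j<d. c j) = d * t"
    using col by (simp flip: sum.distrib)
  moreover have "(\<Sum>i<d. \<Sum>j<d. F i j) = (\<Sum>j<d. \<Sum>i<d. F i j)"
    by (rule sum.swap)
  ultimately have c_sum: "(\<Sum>j<d. c j) = D" by linarith
  have r_le: "r i \<le> D" if "i < d" for i
    unfolding D_def using that by (intro member_le_sum) auto
  have c_le: "c j \<le> D" if "j < d" for j
    unfolding c_sum[symmetric] using that by (intro member_le_sum) auto
  have "(\<Sum>j<d. N i j) = t * E" if "i < d" for i
    using deficit_completion_sum[where F = "F i" and r = "r i" and c = c] row r_le c_sum that
    unfolding N_def E_def by auto
  moreover have "(\<Sum>i<d. N i j) = t * E" if "j < d" for j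
    using deficit_completion_sum[where F = "\<lambda>i. F i j" and r = "c j" and c = r] col c_le that
    unfolding N_def E_def D_def by (auto simp: mult.commute)
  moreover have "\<bar>real (N i j) / real (t * E) - B i j\<bar> \<le> (real d + 1) / real t"
    if ij: "i < d" "j < d" for i j
  proof -
    have "\<bar>real (F i j) - real t * B i j\<bar> \<le> 1"
      using B ij unfolding F_def bistochastic_def by (auto simp: of_nat_nat) linarith+
    moreover have "real (r i * c j) \<le> real d * real E"
      using row[OF ij(1)] c_le[OF ij(2)] unfolding E_def of_nat_mult by (intro mult_mono) auto
    ultimately show ?thesis
      using deficit_completion_error[of "real t" "real E" "real (F i j)" "B i j" "real (r i * c j)"] t
      unfolding N_def E_def by simp
  qed
  ultimately show ?thesis
    using t by (intro exI[of _ "t * E"] exI[of _ N]) (simp add: E_def)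
qed

lemma bistochastic_approx_in_U_set:
  assumes B: "B \<in> bistochastic d" and e: "0 < e"
  shows "\<exists>s > 0. \<exists>M \<in> U_set d s. \<forall>i j. \<bar>M i j - B i j\<bar> \<le> e"
proof -
  obtain t :: nat where "(real d + 1) / e < real t"
    using reals_Archimedean2 by blast
  then have scaled: "real d + 1 < real t * e"
    using e by (simp add: pos_divide_less_eq)
  then have t: "0 < t"
    by (cases t) auto
  have err: "(real d + 1) / real t \<le> e"
    using scaled t by (simp add: pos_divide_le_eq mult.commute)
  obtain s N where s: "0 < s" and N: "\<forall>i<d. (\<Sum>j<d. N i j) = s" "\<forall>j<d. (\<Sum>i<d. N i j) = s"
    and close: "\<forall>i<d. \<forall>j<d. \<bar>real (N i j) / real s - B i j\<bar> \<le> (real d + 1) / real t"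
    using bistochastic_integer_approx[OF B t] by blast
  define M where "M = (\<lambda>i j. if i < d \<and> j < d then real (N i j) / real s else 0)"
  have "M \<in> U_set d s"
    unfolding M_def by (rule integer_matrix_in_U_set[OF s N])
  moreover have "\<bar>M i j - B i j\<bar> \<le> e" for i j
  proof (cases "i < d \<and> j < d")
    case True
    then show ?thesis using close err unfolding M_def by fastforce
  next
    case False
    then have "B i j = 0" using B unfolding bistochastic_def by auto
    then show ?thesis using False e unfolding M_def by auto
  qed
  ultimately show ?thesis
    using s by blast
qed

lemma tendsto_fun_iff:
  "((f :: 'a \<Rightarrow> 'b \<Rightarrow> 'c::topological_space) \<longlongrightarrow> l) F \<longleftrightarrow> (\<forall>i. ((\<lambda>x. f x i) \<longlongrightarrow> l i) F)"
  using limitin_componentwise[of "\<lambda>i. euclidean" UNIV f l F]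
  by (simp add: euclidean_product_topology)

lemma mem_closure_if_uniformly_approximable:
  fixes B :: "'a \<Rightarrow> 'b \<Rightarrow> real"
  assumes "\<And>e. 0 < e \<Longrightarrow> \<exists>M \<in> S. \<forall>i j. \<bar>M i j - B i j\<bar> \<le> e"
  shows "B \<in> closure S"
proof -
  have "\<forall>n. \<exists>M \<in> S. \<forall>i j. \<bar>M i j - B i j\<bar> \<le> inverse (real (Suc n))"
    using assms by simp
  then obtain M where M_in: "\<And>n. M n \<in> S"
    and M_close: "\<And>n i j. \<bar>M n i j - B i j\<bar> \<le> inverse (real (Suc n))"
    by metis
  have "(\<lambda>n. M n i j) \<longlonglongrightarrow> B i j" for i j
  proof (rule LIM_zero_cancel, rule Lim_null_comparison)
    show "\<forall>\<^sub>F n in sequentially. norm (M n i j - B i j) \<le> inverse (real (Suc n))"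
      using M_close by simp
  qed (rule LIMSEQ_inverse_real_of_nat)
  then have "M \<longlonglongrightarrow> B" by (simp add: tendsto_fun_iff)
  then show ?thesis
    using closed_sequentially[OF closed_closure] M_in closure_subset by blast
qed

lemma closed_bistochastic: "closed (bistochastic d)"
proof -
  have entry: "continuous_on UNIV (\<lambda>B::nat \<Rightarrow> nat \<Rightarrow> real. B i j)" for i j
    by (rule continuous_on_product_then_coordinatewise) simp
  have "bistochastic d = {B. \<forall>i j. (d \<le> i \<or> d \<le> j) \<longrightarrow> B i j = 0}
      \<inter> {B. \<forall>i j. (i < d \<and> j < d) \<longrightarrow> 0 \<le> B i j}
      \<inter> {B. \<forall>i. i < d \<longrightarrow> (\<Sum>j<d. B i j) = 1}
      \<inter> {B. \<forall>j. j < d \<longrightarrow> (\<Sum>i<d. B i j) = 1}"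
    unfolding bistochastic_def by auto
  then show ?thesis
    by (simp only:) (intro closed_Int closed_Collect_all closed_Collect_imp closed_Collect_eq
        closed_Collect_le continuous_on_sum entry continuous_on_const open_Collect_const)
qed

theorem proposition3p12:
  fixes d s :: nat
  assumes "2 \<le> d" and "1 \<le> s"
  shows "U_set d s \<subseteq> L_set d s \<and> L_set d s \<subseteq> bistochastic d
         \<and> closure (\<Union>t\<in>{1..}. L_set d t) = bistochastic d"
proof -
  have L_sub: "L_set d t \<subseteq> bistochastic d" for t
    unfolding L_set_def by auto
  have "closure (\<Union>t\<in>{1..}. L_set d t) \<subseteq> bistochastic d"
    using L_sub closed_bistochastic by (intro closure_minimal) auto
  moreover have "B \<in> closure (\<Union>t\<in>{1..}. L_set d t)" if B: "B \<in> bistochastic d" for B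
  proof (rule mem_closure_if_uniformly_approximable)
    fix e :: real assume "0 < e"
    then obtain t M where "0 < t" "M \<in> U_set d t" "\<forall>i j. \<bar>M i j - B i j\<bar> \<le> e"
      using bistochastic_approx_in_U_set[OF B] by blast
    then show "\<exists>M \<in> (\<Union>t\<in>{1..}. L_set d t). \<forall>i j. \<bar>M i j - B i j\<bar> \<le> e"
      using U_set_subset_L_set[of t d] by force
  qed
  ultimately show ?thesis
    using U_set_subset_L_set[of s d] assms(2) L_sub by auto
qed

end
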